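(* Let $\mathbf A,\mathbf B\in\mathsf{ICM}$. Every ring homomorphism $h:\mathbf A^-\to\mathbf B^-$ is also a homomorphism $h:\mathbf A\to\mathbf B$ of implicitly closed meadows, i.e. it also satisfies $h(a^* )=h(a)^*$ and $h(r_p(a))=r_p(h(a))$ for all $a\in A$ and all primes $p$.
   Context: A field is weakly rooted if it has characteristic $0$, or prime characteristic $p$ with every element having a $p$-th root. Weak inverse: $a^*=a^{-1}$ if $a\ne0$, $0^*=0$; weak $p$-root: $r_p(a)=\sqrt[p]{a}$ if the characteristic is $p$, else $0$. An implicitly closed field is a weakly rooted field (ring language $\{+,\cdot,-,0,1\}$) expanded by $(\,)^*$ and all $r_p$; $\mathsf{ICM}$ is the class of algebras isomorphic to subalgebras of direct products of implicitly closed fields. $\mathbf A^-$ denotes the ring reduct of $\mathbf A$. *)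

theory Defs
  imports "HOL-Algebra.Ring" "HOL-Algebra.RingHom" "HOL-Computational_Algebra.Primes"
begin

text \<open>Algebras in the signature of implicitly closed meadows:
  the ring operations (HOL-Algebra ring record: carrier, mult, one, zero, add;
  negation is the additive inverse), the weak inverse and the weak p-roots
  (one operation rt p for every prime p).\<close>
record 'a icm_alg = "'a ring" +
  winv :: "'a \<Rightarrow> 'a"
  rt   :: "nat \<Rightarrow> 'a \<Rightarrow> 'a"

definition alg_char :: "('a, 'm) ring_scheme \<Rightarrow> nat" where
  "alg_char R = (if \<exists>n::nat>0. add_pow R n \<one>\<^bsub>R\<^esub> = \<zero>\<^bsub>R\<^esub>
                  then (LEAST n::nat. n > 0 \<and> add_pow R n \<one>\<^bsub>R\<^esub> = \<zero>\<^bsub>R\<^esub>) else 0)"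

definition weakly_rooted :: "('a, 'm) ring_scheme \<Rightarrow> bool" where
  "weakly_rooted F \<longleftrightarrow> field F \<and>
     (alg_char F = 0 \<or>
      (prime (alg_char F) \<and>
       (\<forall>a\<in>carrier F. \<exists>b\<in>carrier F. b [^]\<^bsub>F\<^esub> (alg_char F) = a)))"

definition implicitly_closed_field :: "'a icm_alg \<Rightarrow> bool" where
  "implicitly_closed_field F \<longleftrightarrow> weakly_rooted F \<and>
     (\<forall>a\<in>carrier F. winv F a = (if a = \<zero>\<^bsub>F\<^esub> then \<zero>\<^bsub>F\<^esub> else inv\<^bsub>F\<^esub> a)) \<and>
     (\<forall>p. prime p \<longrightarrow> (\<forall>a\<in>carrier F.
        rt F p a \<in> carrier F \<and>
        (if alg_char F = p then rt F p a [^]\<^bsub>F\<^esub> p = a else rt F p a = \<zero>\<^bsub>F\<^esub>)))"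

definition prod_alg :: "'i set \<Rightarrow> ('i \<Rightarrow> 'c icm_alg) \<Rightarrow> ('i \<Rightarrow> 'c) icm_alg" where
  "prod_alg I F =
     \<lparr> carrier = (\<Pi>\<^sub>E i\<in>I. carrier (F i)),
       monoid.mult = (\<lambda>f g. \<lambda>i\<in>I. f i \<otimes>\<^bsub>F i\<^esub> g i),
       one = (\<lambda>i\<in>I. \<one>\<^bsub>F i\<^esub>),
       zero = (\<lambda>i\<in>I. \<zero>\<^bsub>F i\<^esub>),
       add = (\<lambda>f g. \<lambda>i\<in>I. f i \<oplus>\<^bsub>F i\<^esub> g i),
       winv = (\<lambda>f. \<lambda>i\<in>I. winv (F i) (f i)),
       rt = (\<lambda>p f. \<lambda>i\<in>I. rt (F i) p (f i)) \<rparr>"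

definition icm_algebra :: "'a icm_alg \<Rightarrow> bool" where
  "icm_algebra A \<longleftrightarrow>
     \<one>\<^bsub>A\<^esub> \<in> carrier A \<and> \<zero>\<^bsub>A\<^esub> \<in> carrier A \<and>
     (\<forall>a\<in>carrier A. \<forall>b\<in>carrier A. a \<oplus>\<^bsub>A\<^esub> b \<in> carrier A \<and> a \<otimes>\<^bsub>A\<^esub> b \<in> carrier A) \<and>
     (\<forall>a\<in>carrier A. \<exists>b\<in>carrier A. a \<oplus>\<^bsub>A\<^esub> b = \<zero>\<^bsub>A\<^esub>) \<and>
     (\<forall>a\<in>carrier A. winv A a \<in> carrier A) \<and>
     (\<forall>p. prime p \<longrightarrow> (\<forall>a\<in>carrier A. rt A p a \<in> carrier A))"

definition icm_hom :: "'a icm_alg \<Rightarrow> 'b icm_alg \<Rightarrow> ('a \<Rightarrow> 'b) set" where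
  "icm_hom A B = {h. h \<in> ring_hom A B \<and> h \<zero>\<^bsub>A\<^esub> = \<zero>\<^bsub>B\<^esub> \<and>
      (\<forall>a\<in>carrier A. h (winv A a) = winv B (h a)) \<and>
      (\<forall>p. prime p \<longrightarrow> (\<forall>a\<in>carrier A. h (rt A p a) = rt B p (h a)))}"

text \<open>ICM: algebras isomorphic to a subalgebra of a direct product of implicitly closed
  fields, i.e. algebras with an injective homomorphism into such a product.  Since HOL
  cannot quantify over types inside a formula, the index type 'i and the carrier type 'c
  of the fields are given as explicit type parameters.\<close>
definition ICM :: "'i itself \<Rightarrow> 'c itself \<Rightarrow> 'a icm_alg \<Rightarrow> bool" where
  "ICM _ _ A \<longleftrightarrow> icm_algebra A \<and>
     (\<exists>(I :: 'i set) (F :: 'i \<Rightarrow> 'c icm_alg) e.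
        (\<forall>i\<in>I. implicitly_closed_field (F i)) \<and>
        e \<in> icm_hom A (prod_alg I F) \<and> inj_on e (carrier A))"

end

theory Submission
  imports Defs
begin

text \<open>In an implicitly closed field the weak inverse and the weak \<open>p\<close>-roots are the unique
  solutions of ring equations: \<open>y = x\<^sup>*\<close> iff \<open>x y x = x\<close> and \<open>y x y = y\<close>; and, with
  \<open>c = (p\<cdot>1)(p\<cdot>1)\<^sup>*\<close> (which is \<open>0\<close> in characteristic \<open>p\<close> and \<open>1\<close> otherwise),
  \<open>y = r\<^sub>p(x)\<close> iff \<open>c y = 0\<close> and \<open>y\<^sup>p + c x = x\<close>, uniqueness in characteristic \<open>p\<close>
  being injectivity of the Frobenius map.  Equations are checked componentwise, so these
  characterisations persist in every subalgebra of a product of such fields.  A ring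
  homomorphism preserves the equations, and it preserves \<open>c\<close> once it preserves \<open>\<^sup>*\<close>;
  hence it preserves \<open>\<^sup>*\<close> and every \<open>r\<^sub>p\<close>.\<close>

lemma (in ring) add_pow_one_eq_zero_iff:
  "[n] \<cdot> \<one> = \<zero> \<longleftrightarrow> alg_char R dvd n"
proof (cases "\<exists>m::nat>0. [m] \<cdot> \<one> = \<zero>")
  case False
  then have "alg_char R = 0" unfolding alg_char_def by (simp only: if_not_P[OF False] if_False)
  with False show ?thesis by (metis add.nat_pow_0 dvd_0_left_iff neq0_conv)
next
  case True
  define c where "c = alg_char R"
  have c_Least: "c = (LEAST m::nat. m > 0 \<and> [m] \<cdot> \<one> = \<zero>)"
    using True unfolding c_def alg_char_def by simp
  then have "c > 0" and c_zero: "[c] \<cdot> \<one> = \<zero>"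
    using LeastI_ex[OF True] by auto
  have "[n] \<cdot> \<one> = [(c * (n div c))] \<cdot> \<one> \<oplus> [(n mod c)] \<cdot> \<one>"
    by (simp add: add.nat_pow_mult)
  also have "[(c * (n div c))] \<cdot> \<one> = \<zero>"
    by (simp add: add.nat_pow_pow[symmetric] c_zero)
  finally have "[n] \<cdot> \<one> = [(n mod c)] \<cdot> \<one>" by simp
  moreover have "[(n mod c)] \<cdot> \<one> \<noteq> \<zero>" if "n mod c \<noteq> 0"
  proof
    assume "[(n mod c)] \<cdot> \<one> = \<zero>"
    then have "c \<le> n mod c"
      using Least_le[of "\<lambda>m. m > 0 \<and> [m] \<cdot> \<one> = \<zero>" "n mod c"] that c_Least by simp
    with mod_less_divisor[OF \<open>c > 0\<close>, of n] show False by linarith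
  qed
  ultimately show ?thesis
    by (auto simp: c_def[symmetric] dvd_eq_mod_eq_0)
qed

lemma (in cring) binomial:
  assumes x: "x \<in> carrier R" and y: "y \<in> carrier R"
  shows "(x \<oplus> y) [^] n = (\<Oplus>k \<in> {..n}. [(n choose k)] \<cdot> (x [^] k \<otimes> y [^] (n - k)))"
proof (induction n)
  case 0
  then show ?case by simp
next
  case (Suc n)
  define S where "S = (x \<oplus> y) [^] n"
  define V where "V = (\<Oplus>k \<in> {..n}. [(n choose Suc k)] \<cdot> (x [^] Suc k \<otimes> y [^] (n - k)))"
  have S_x: "S \<otimes> x = (\<Oplus>k \<in> {..n}. [(n choose k)] \<cdot> (x [^] Suc k \<otimes> y [^] (n - k)))"
    unfolding S_def Suc.IH using x y
    by (auto simp: finsum_rdistr add_pow_ldistr add_pow_rdistr m_ac intro!: finsum_cong')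
  have "S \<otimes> y = (\<Oplus>k \<in> {..n}. [(n choose k)] \<cdot> (x [^] k \<otimes> y [^] (Suc n - k)))"
    unfolding S_def Suc.IH using x y
    by (auto simp: finsum_rdistr add_pow_ldistr add_pow_rdistr m_ac Suc_diff_le intro!: finsum_cong')
  also have "\<dots> = (\<Oplus>k \<in> {..Suc n}. [(n choose k)] \<cdot> (x [^] k \<otimes> y [^] (Suc n - k)))"
    using x y by (simp add: binomial_eq_0)
  also have "\<dots> = V \<oplus> y [^] Suc n"
    unfolding V_def using x y by (simp add: finsum_Suc2 del: finsum_Suc)
  finally have S_y: "S \<otimes> y = V \<oplus> y [^] Suc n" .
  have "(\<Oplus>k \<in> {..Suc n}. [(Suc n choose k)] \<cdot> (x [^] k \<otimes> y [^] (Suc n - k)))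
      = (\<Oplus>k \<in> {..n}. [(n choose k)] \<cdot> (x [^] Suc k \<otimes> y [^] (n - k))
            \<oplus> [(n choose Suc k)] \<cdot> (x [^] Suc k \<otimes> y [^] (n - k))) \<oplus> y [^] Suc n"
    using x y by (simp add: finsum_Suc2 add.nat_pow_mult del: finsum_Suc)
  also have "\<dots> = S \<otimes> x \<oplus> (V \<oplus> y [^] Suc n)"
    unfolding S_x V_def using x y by (simp add: finsum_addf a_assoc del: nat_pow_Suc)
  also have "\<dots> = S \<otimes> (x \<oplus> y)"
    unfolding S_y[symmetric] using x y by (simp add: S_def r_distr)
  finally show ?case unfolding S_def by simp
qed

lemma (in ring) add_pow_char_dvd_eq_zero:
  assumes "alg_char R dvd n" and "x \<in> carrier R"
  shows "[n] \<cdot> x = \<zero>"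
proof -
  have "[n] \<cdot> x = [n] \<cdot> \<one> \<otimes> x"
    using assms(2) by (simp add: add_pow_ldistr)
  also have "[n] \<cdot> \<one> = \<zero>"
    using assms(1) by (simp add: add_pow_one_eq_zero_iff)
  finally show ?thesis
    using assms(2) by simp
qed

lemma (in cring) freshmans_dream:
  assumes p: "prime p" "alg_char R = p" and x: "x \<in> carrier R" and y: "y \<in> carrier R"
  shows "(x \<oplus> y) [^] p = x [^] p \<oplus> y [^] p"
proof -
  have "p \<noteq> 0" using p by auto
  let ?T = "\<lambda>k. [(p choose k)] \<cdot> (x [^] k \<otimes> y [^] (p - k))"
  have "(x \<oplus> y) [^] p = (\<Oplus>k \<in> {..p}. ?T k)"
    by (rule binomial[OF x y])
  also have "\<dots> = (\<Oplus>k \<in> {p, 0}. ?T k)"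
  proof (rule add.finprod_mono_neutral_cong_right)
    show "?T k = \<zero>" if "k \<in> {..p} - {p, 0}" for k
      using that p x y by (intro add_pow_char_dvd_eq_zero) (auto simp: dvd_choose_prime)
  qed (use x y in auto)
  also have "\<dots> = x [^] p \<oplus> y [^] p"
    using \<open>p \<noteq> 0\<close> x y by simp
  finally show ?thesis .
qed

lemma (in domain) nat_pow_eq_zero_iff:
  "x \<in> carrier R \<Longrightarrow> x [^] (n::nat) = \<zero> \<longleftrightarrow> x = \<zero> \<and> n \<noteq> 0"
  by (induction n) (auto simp: integral_iff)

lemma (in domain) nat_pow_char_inj:
  assumes p: "prime p" "alg_char R = p" and x: "x \<in> carrier R" and y: "y \<in> carrier R"
    and eq: "x [^] p = y [^] p"
  shows "x = y"
proof -
  define z where "z = x \<ominus> y"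
  have z: "z \<in> carrier R" and x_eq: "x = z \<oplus> y"
    using x y by (simp_all add: z_def a_minus_def a_assoc l_neg)
  have "y [^] p = z [^] p \<oplus> y [^] p"
    using eq freshmans_dream[OF p z y] x_eq by simp
  then have "z [^] p = \<zero>"
    using add.r_cancel_one'[of "y [^] p" "z [^] p"] y z by simp
  then have "z = \<zero>"
    using z by (simp add: nat_pow_eq_zero_iff)
  with x_eq y show ?thesis by simp
qed

definition char_idem :: "'a icm_alg \<Rightarrow> nat \<Rightarrow> 'a" where
  "char_idem K p = add_pow K p \<one>\<^bsub>K\<^esub> \<otimes>\<^bsub>K\<^esub> winv K (add_pow K p \<one>\<^bsub>K\<^esub>)"

locale ic_field = field K for K :: "'a icm_alg" (structure) +
  assumes implicitly_closed: "implicitly_closed_field K"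
begin

lemma winv_eq: "x \<in> carrier K \<Longrightarrow> winv K x = (if x = \<zero> then \<zero> else inv x)"
  using implicitly_closed unfolding implicitly_closed_field_def by simp

lemma winv_char:
  assumes x: "x \<in> carrier K" and y: "y \<in> carrier K"
  shows "x \<otimes> y \<otimes> x = x \<and> y \<otimes> x \<otimes> y = y \<longleftrightarrow> y = winv K x"
proof (cases "x = \<zero>")
  case True
  with y show ?thesis by (auto simp: winv_eq)
next
  case False
  then have x_unit: "x \<in> Units K" using x field_Units by simp
  have "x \<otimes> y \<otimes> x = x \<longleftrightarrow> x \<otimes> y = \<one>"
    using x y False by (metis l_one m_closed m_rcancel one_closed)
  also have "\<dots> \<longleftrightarrow> y = inv x"
    using x y x_unit by (metis Units_r_inv comm_inv_char)
  finally show ?thesis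
    using x y x_unit False by (auto simp: winv_eq m_assoc)
qed

lemma alg_char_eq_prime_iff:
  assumes p: "prime p"
  shows "alg_char K = p \<longleftrightarrow> [p] \<cdot> \<one> = \<zero>"
proof -
  have "alg_char K = 0 \<or> prime (alg_char K)"
    using implicitly_closed unfolding implicitly_closed_field_def weakly_rooted_def by auto
  with p show ?thesis
    by (auto simp: add_pow_one_eq_zero_iff primes_dvd_imp_eq)
qed

lemma char_idem_eq:
  assumes p: "prime p"
  shows "char_idem K p = (if alg_char K = p then \<zero> else \<one>)"
proof -
  have "[p] \<cdot> \<one> \<in> carrier K" by simp
  then show ?thesis
    unfolding char_idem_def using alg_char_eq_prime_iff[OF p] by (simp add: winv_eq field_Units)
qed

lemma rt_closed: "prime p \<Longrightarrow> x \<in> carrier K \<Longrightarrow> rt K p x \<in> carrier K"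
  and rt_pow_eq: "prime p \<Longrightarrow> x \<in> carrier K \<Longrightarrow> alg_char K = p \<Longrightarrow> rt K p x [^] p = x"
  and rt_eq_zero: "prime p \<Longrightarrow> x \<in> carrier K \<Longrightarrow> alg_char K \<noteq> p \<Longrightarrow> rt K p x = \<zero>"
  using implicitly_closed unfolding implicitly_closed_field_def by auto

lemma rt_char:
  assumes p: "prime p" and x: "x \<in> carrier K" and y: "y \<in> carrier K"
  shows "char_idem K p \<otimes> y = \<zero> \<and> y [^] p \<oplus> char_idem K p \<otimes> x = x \<longleftrightarrow> y = rt K p x"
proof (cases "alg_char K = p")
  case True
  have "y [^] p = x \<longleftrightarrow> y = rt K p x"
    using nat_pow_char_inj[OF p True y rt_closed[OF p x]] rt_pow_eq[OF p x True] by auto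
  with True p x y show ?thesis by (simp add: char_idem_eq)
next
  case False
  have "p \<noteq> 0" using p by auto
  with False p x y show ?thesis by (auto simp: char_idem_eq rt_eq_zero nat_pow_zero)
qed

end

locale icm_embedding =
  fixes A :: "'a icm_alg" and I :: "'i set" and F :: "'i \<Rightarrow> 'c icm_alg" and e :: "'a \<Rightarrow> 'i \<Rightarrow> 'c"
  assumes algebra: "icm_algebra A"
    and fields: "\<forall>i\<in>I. implicitly_closed_field (F i)"
    and hom: "e \<in> icm_hom A (prod_alg I F)"
    and inj: "inj_on e (carrier A)"
begin

lemma ic_field: "i \<in> I \<Longrightarrow> ic_field (F i)"
  using fields unfolding ic_field_def ic_field_axioms_def
  by (simp add: implicitly_closed_field_def weakly_rooted_def)

lemma cring_F [simp]: "i \<in> I \<Longrightarrow> cring (F i)"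
  using ic_field by (simp add: ic_field_def fieldE(1))

lemma one_closed [simp]: "\<one>\<^bsub>A\<^esub> \<in> carrier A"
  and zero_closed [simp]: "\<zero>\<^bsub>A\<^esub> \<in> carrier A"
  and add_closed [simp]: "s \<in> carrier A \<Longrightarrow> t \<in> carrier A \<Longrightarrow> s \<oplus>\<^bsub>A\<^esub> t \<in> carrier A"
  and mult_closed [simp]: "s \<in> carrier A \<Longrightarrow> t \<in> carrier A \<Longrightarrow> s \<otimes>\<^bsub>A\<^esub> t \<in> carrier A"
  and neg_exists: "s \<in> carrier A \<Longrightarrow> \<exists>t\<in>carrier A. s \<oplus>\<^bsub>A\<^esub> t = \<zero>\<^bsub>A\<^esub>"
  and winv_closed [simp]: "s \<in> carrier A \<Longrightarrow> winv A s \<in> carrier A"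
  and rt_closed [simp]: "prime p \<Longrightarrow> s \<in> carrier A \<Longrightarrow> rt A p s \<in> carrier A"
  using algebra unfolding icm_algebra_def by auto

lemma e_closed [simp]: "s \<in> carrier A \<Longrightarrow> i \<in> I \<Longrightarrow> e s i \<in> carrier (F i)"
  and e_add [simp]: "s \<in> carrier A \<Longrightarrow> t \<in> carrier A \<Longrightarrow> i \<in> I \<Longrightarrow>
    e (s \<oplus>\<^bsub>A\<^esub> t) i = e s i \<oplus>\<^bsub>F i\<^esub> e t i"
  and e_mult [simp]: "s \<in> carrier A \<Longrightarrow> t \<in> carrier A \<Longrightarrow> i \<in> I \<Longrightarrow>
    e (s \<otimes>\<^bsub>A\<^esub> t) i = e s i \<otimes>\<^bsub>F i\<^esub> e t i"
  and e_one [simp]: "i \<in> I \<Longrightarrow> e \<one>\<^bsub>A\<^esub> i = \<one>\<^bsub>F i\<^esub>"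
  and e_zero [simp]: "i \<in> I \<Longrightarrow> e \<zero>\<^bsub>A\<^esub> i = \<zero>\<^bsub>F i\<^esub>"
  and e_winv [simp]: "s \<in> carrier A \<Longrightarrow> i \<in> I \<Longrightarrow> e (winv A s) i = winv (F i) (e s i)"
  and e_rt [simp]: "prime p \<Longrightarrow> s \<in> carrier A \<Longrightarrow> i \<in> I \<Longrightarrow> e (rt A p s) i = rt (F i) p (e s i)"
  using hom unfolding icm_hom_def ring_hom_def prod_alg_def by (auto simp: PiE_iff)

lemma eq_iff_components:
  assumes "s \<in> carrier A" and "t \<in> carrier A"
  shows "s = t \<longleftrightarrow> (\<forall>i\<in>I. e s i = e t i)"
proof -
  have "e s \<in> carrier (prod_alg I F)" and "e t \<in> carrier (prod_alg I F)"
    using hom assms unfolding icm_hom_def ring_hom_def by auto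
  then have "e s = e t \<longleftrightarrow> (\<forall>i\<in>I. e s i = e t i)"
    unfolding prod_alg_def by (auto intro: PiE_ext)
  with inj assms show ?thesis by (auto dest: inj_onD)
qed

lemma cring: "cring A"
proof (rule cringI)
  show "abelian_group A"
  proof (rule abelian_groupI)
    fix s assume s: "s \<in> carrier A"
    then obtain t where t: "t \<in> carrier A" "s \<oplus>\<^bsub>A\<^esub> t = \<zero>\<^bsub>A\<^esub>"
      using neg_exists by blast
    with s show "\<exists>t\<in>carrier A. t \<oplus>\<^bsub>A\<^esub> s = \<zero>\<^bsub>A\<^esub>"
      by (intro bexI[of _ t]) (auto simp: eq_iff_components cring.cring_simprules)
  qed (auto simp: eq_iff_components cring.cring_simprules)
  show "comm_monoid A"
    by (rule comm_monoidI) (auto simp: eq_iff_components cring.cring_simprules)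
qed (auto simp: eq_iff_components cring.cring_simprules)

sublocale A: cring A
  by (rule cring)

lemma e_nat_pow [simp]:
  "s \<in> carrier A \<Longrightarrow> i \<in> I \<Longrightarrow> e (s [^]\<^bsub>A\<^esub> (n::nat)) i = e s i [^]\<^bsub>F i\<^esub> n"
  by (induction n) auto

lemma e_add_pow_one [simp]:
  "i \<in> I \<Longrightarrow> e ([(n::nat)] \<cdot>\<^bsub>A\<^esub> \<one>\<^bsub>A\<^esub>) i = [n] \<cdot>\<^bsub>F i\<^esub> \<one>\<^bsub>F i\<^esub>"
  by (induction n) (simp_all add: add_pow_def[where R = "F i"])

lemma e_char_idem [simp]: "i \<in> I \<Longrightarrow> e (char_idem A p) i = char_idem (F i) p"
  by (simp add: char_idem_def)

lemma winv_char:
  assumes x: "x \<in> carrier A" and y: "y \<in> carrier A"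
  shows "x \<otimes>\<^bsub>A\<^esub> y \<otimes>\<^bsub>A\<^esub> x = x \<and> y \<otimes>\<^bsub>A\<^esub> x \<otimes>\<^bsub>A\<^esub> y = y \<longleftrightarrow> y = winv A x"
proof -
  have "x \<otimes>\<^bsub>A\<^esub> y \<otimes>\<^bsub>A\<^esub> x = x \<and> y \<otimes>\<^bsub>A\<^esub> x \<otimes>\<^bsub>A\<^esub> y = y \<longleftrightarrow>
      (\<forall>i\<in>I. e x i \<otimes>\<^bsub>F i\<^esub> e y i \<otimes>\<^bsub>F i\<^esub> e x i = e x i \<and>
              e y i \<otimes>\<^bsub>F i\<^esub> e x i \<otimes>\<^bsub>F i\<^esub> e y i = e y i)"
    using x y by (auto simp: eq_iff_components)
  also have "\<dots> \<longleftrightarrow> (\<forall>i\<in>I. e y i = winv (F i) (e x i))"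
    using x y by (simp add: ic_field.winv_char[OF ic_field])
  also have "\<dots> \<longleftrightarrow> y = winv A x"
    using x y by (simp add: eq_iff_components)
  finally show ?thesis .
qed

lemma rt_char:
  assumes p: "prime p" and x: "x \<in> carrier A" and y: "y \<in> carrier A"
  shows "char_idem A p \<otimes>\<^bsub>A\<^esub> y = \<zero>\<^bsub>A\<^esub> \<and>
      y [^]\<^bsub>A\<^esub> p \<oplus>\<^bsub>A\<^esub> char_idem A p \<otimes>\<^bsub>A\<^esub> x = x \<longleftrightarrow> y = rt A p x"
proof -
  have c: "char_idem A p \<in> carrier A"
    by (simp add: char_idem_def)
  have "char_idem A p \<otimes>\<^bsub>A\<^esub> y = \<zero>\<^bsub>A\<^esub> \<and>
      y [^]\<^bsub>A\<^esub> p \<oplus>\<^bsub>A\<^esub> char_idem A p \<otimes>\<^bsub>A\<^esub> x = x \<longleftrightarrow>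
      (\<forall>i\<in>I. char_idem (F i) p \<otimes>\<^bsub>F i\<^esub> e y i = \<zero>\<^bsub>F i\<^esub> \<and>
         e y i [^]\<^bsub>F i\<^esub> p \<oplus>\<^bsub>F i\<^esub> char_idem (F i) p \<otimes>\<^bsub>F i\<^esub> e x i = e x i)"
    using x y c by (auto simp: eq_iff_components)
  also have "\<dots> \<longleftrightarrow> (\<forall>i\<in>I. e y i = rt (F i) p (e x i))"
    using p x y by (simp add: ic_field.rt_char[OF ic_field])
  also have "\<dots> \<longleftrightarrow> y = rt A p x"
    using p x y by (simp add: eq_iff_components)
  finally show ?thesis .
qed

end

lemma (in ring_hom_ring) hom_add_pow:
  "x \<in> carrier R \<Longrightarrow> h ([(n::nat)] \<cdot> x) = [n] \<cdot>\<^bsub>S\<^esub> h x"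
  by (induction n) auto

lemma ICM_imp_icm_embedding:
  "ICM TYPE('i) TYPE('c) A \<Longrightarrow> \<exists>(I :: 'i set) (F :: 'i \<Rightarrow> 'c icm_alg) e. icm_embedding A I F e"
  unfolding ICM_def icm_embedding_def by blast

locale icm_ring_hom =
  a: icm_embedding A IA FA eA + b: icm_embedding B IB FB eB
  for A :: "'a icm_alg" and IA :: "'i1 set" and FA :: "'i1 \<Rightarrow> 'c1 icm_alg" and eA
    and B :: "'b icm_alg" and IB :: "'i2 set" and FB :: "'i2 \<Rightarrow> 'c2 icm_alg" and eB +
  fixes h :: "'a \<Rightarrow> 'b"
  assumes ring_hom: "h \<in> ring_hom A B"
begin

sublocale ring_hom_cring A B h
  by unfold_locales (rule ring_hom)

lemma hom_winv:
  assumes x: "x \<in> carrier A"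
  shows "h (winv A x) = winv B (h x)"
proof -
  let ?y = "winv A x"
  have "x \<otimes>\<^bsub>A\<^esub> ?y \<otimes>\<^bsub>A\<^esub> x = x \<and> ?y \<otimes>\<^bsub>A\<^esub> x \<otimes>\<^bsub>A\<^esub> ?y = ?y"
    using a.winv_char x by simp
  then have "h x \<otimes>\<^bsub>B\<^esub> h ?y \<otimes>\<^bsub>B\<^esub> h x = h x \<and> h ?y \<otimes>\<^bsub>B\<^esub> h x \<otimes>\<^bsub>B\<^esub> h ?y = h ?y"
    using x by (simp flip: hom_mult)
  then show ?thesis
    using b.winv_char x by simp
qed

lemma hom_char_idem: "h (char_idem A p) = char_idem B p"
  by (simp add: char_idem_def hom_winv ring.hom_add_pow)

lemma hom_rt:
  assumes p: "prime p" and x: "x \<in> carrier A"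
  shows "h (rt A p x) = rt B p (h x)"
proof -
  let ?y = "rt A p x" and ?c = "char_idem A p"
  have c: "?c \<in> carrier A"
    by (simp add: char_idem_def)
  have "?c \<otimes>\<^bsub>A\<^esub> ?y = \<zero>\<^bsub>A\<^esub> \<and> ?y [^]\<^bsub>A\<^esub> p \<oplus>\<^bsub>A\<^esub> ?c \<otimes>\<^bsub>A\<^esub> x = x"
    using a.rt_char p x by simp
  then have "h ?c \<otimes>\<^bsub>B\<^esub> h ?y = \<zero>\<^bsub>B\<^esub> \<and> h ?y [^]\<^bsub>B\<^esub> p \<oplus>\<^bsub>B\<^esub> h ?c \<otimes>\<^bsub>B\<^esub> h x = h x"
    using p x c by (simp flip: hom_mult hom_add ring.hom_nat_pow)
  then show ?thesis
    using b.rt_char p x by (simp add: hom_char_idem)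
qed

end

theorem mainTheorem17:
  fixes A :: "'a icm_alg" and B :: "'b icm_alg" and h :: "'a \<Rightarrow> 'b"
  assumes "ICM TYPE('i1) TYPE('c1) A"
    and "ICM TYPE('i2) TYPE('c2) B"
    and "h \<in> ring_hom A B"
  shows "h \<in> icm_hom A B"
proof -
  obtain IA :: "'i1 set" and FA :: "'i1 \<Rightarrow> 'c1 icm_alg" and eA where "icm_embedding A IA FA eA"
    using ICM_imp_icm_embedding[OF assms(1)] by blast
  moreover obtain IB :: "'i2 set" and FB :: "'i2 \<Rightarrow> 'c2 icm_alg" and eB where "icm_embedding B IB FB eB"
    using ICM_imp_icm_embedding[OF assms(2)] by blast
  ultimately interpret icm_ring_hom A IA FA eA B IB FB eB h
    using assms(3) by (simp add: icm_ring_hom_def icm_ring_hom_axioms_def)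
  show ?thesis
    unfolding icm_hom_def using assms(3) hom_winv hom_rt by simp
qed

end
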